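(* Let $m\in\mathcal{P}(\mathcal{S})$ be such that $Q^d(m)$ is irreducible for all $d\in D^s$, and let $\mathcal{D}(m)=\{d_1,\dots,d_n\}$. For each $k$, let $x^{d_k}(m)$ be the unique $x\in\mathcal{P}(\mathcal{S})$ with $0=\sum_{i\in\mathcal{S}}\sum_{a\in\mathcal{A}}x_iQ_{ija}(m)(d_k)_{ia}$ for all $j\in\mathcal{S}$. Then $$\phi(m)=\operatorname{conv}\big(x^{d_1}(m),\dots,x^{d_n}(m)\big).$$
   Context: Setting: $\mathcal{S}=\{1,\dots,S\}$ ($S>1$), $\mathcal{A}=\{1,\dots,A\}$; for each $a$, $m$, $(Q_{ija}(m))_{i,j}$ is a conservative generator (off-diagonal $\ge 0$, zero row sums); $m\mapsto Q_{ija}(m)$ Lipschitz, $m\mapsto r_{ia}(m)$ continuous; $\beta\in(0,1)$. $\Pi^s$: stationary strategies (matrices $(\pi_{ia})$ with rows in $\mathcal{P}(\mathcal{A})$); $D^s$: deterministic stationary strategies, identified with maps $d:\mathcal{S}\to\mathcal{A}$ via $d_{ia}=\mathbf{1}[a=d(i)]$. $Q^\pi(m)_{ij}=\sum_aQ_{ija}(m)\pi_{ia}$. $V^\ast(m)$: value function of the continuous-time MDP with rates $Q_{ija}(m)$, rewards $r_{ia}(m)$, discount rate $\beta$. $O_i(m)=\operatorname{argmax}_{a}\{r_{ia}(m)+\sum_jQ_{ija}(m)V^\ast_j(m)\}$, $\mathcal{D}(m)=\{d:\mathcal{S}\to\mathcal{A}: d(i)\in O_i(m)\ \forall i\}$.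 Best-response map: $\phi(m)=\{x\in\mathcal{P}(\mathcal{S}):\exists\,\pi\in\operatorname{conv}(\mathcal{D}(m)),\ x^TQ^\pi(m)=0\}$. Irreducible: the directed graph with edges $i\to j$ ($i\ne j$) where the entry is positive is strongly connected. *)

theory Defs
  imports "HOL-Analysis.Analysis"
begin

text \<open>States are a finite type 's, actions a finite type 'a.
  Distributions over states / mean-field states m are vectors in real^'s.
  Q m i j a is Q_{ija}(m); r m i a is r_{ia}(m).\<close>

definition Pdist :: "(real^'n) set" where
  "Pdist = {x. (\<forall>i. 0 \<le> x$i) \<and> (\<Sum>i\<in>UNIV. x$i) = 1}"

definition conservative :: "('s \<Rightarrow> 's \<Rightarrow> real) \<Rightarrow> bool" where
  "conservative G \<longleftrightarrow> (\<forall>i j. i \<noteq> j \<longrightarrow> 0 \<le> G i j) \<and> (\<forall>i. (\<Sum>j\<in>UNIV. G i j) = 0)"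

definition stat_strategies :: "(real^'a^'s) set" where
  "stat_strategies = {\<pi>. \<forall>i. \<pi>$i \<in> Pdist}"

definition det_mat :: "('s \<Rightarrow> 'a) \<Rightarrow> real^'a^'s" where
  "det_mat d = (\<chi> i. \<chi> a. if a = d i then 1 else 0)"

definition Qpol :: "(real^'s \<Rightarrow> 's \<Rightarrow> 's \<Rightarrow> 'a::finite \<Rightarrow> real) \<Rightarrow> real^'s \<Rightarrow> real^'a^'s \<Rightarrow> 's \<Rightarrow> 's \<Rightarrow> real" where
  "Qpol Q m \<pi> i j = (\<Sum>a\<in>UNIV. Q m i j a * \<pi>$i$a)"

definition irreducible :: "('s \<Rightarrow> 's \<Rightarrow> real) \<Rightarrow> bool" where
  "irreducible G \<longleftrightarrow> (\<forall>i j. (i, j) \<in> {(k, l). k \<noteq> l \<and> 0 < G k l}\<^sup>*)"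

text \<open>Optimal value function, characterised as the solution of the
  Hamilton-Jacobi-Bellman (optimality) equation of the discounted
  continuous-time MDP: beta V_i = max_a (r_ia + sum_j Q_ija V_j).\<close>
definition Vstar :: "(real^'s \<Rightarrow> 's::finite \<Rightarrow> 's \<Rightarrow> 'a::finite \<Rightarrow> real) \<Rightarrow> (real^'s \<Rightarrow> 's \<Rightarrow> 'a \<Rightarrow> real)
     \<Rightarrow> real \<Rightarrow> real^'s \<Rightarrow> 's \<Rightarrow> real" where
  "Vstar Q r \<beta> m = (THE V. \<forall>i. \<beta> * V i = Max (range (\<lambda>a. r m i a + (\<Sum>j\<in>UNIV. Q m i j a * V j))))"

definition Oset :: "(real^'s \<Rightarrow> 's::finite \<Rightarrow> 's \<Rightarrow> 'a::finite \<Rightarrow> real) \<Rightarrow> (real^'s \<Rightarrow> 's \<Rightarrow> 'a \<Rightarrow> real)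
     \<Rightarrow> real \<Rightarrow> real^'s \<Rightarrow> 's \<Rightarrow> 'a set" where
  "Oset Q r \<beta> m i = {a. \<forall>b. r m i b + (\<Sum>j\<in>UNIV. Q m i j b * Vstar Q r \<beta> m j)
                          \<le> r m i a + (\<Sum>j\<in>UNIV. Q m i j a * Vstar Q r \<beta> m j)}"

definition Dopt :: "(real^'s \<Rightarrow> 's::finite \<Rightarrow> 's \<Rightarrow> 'a::finite \<Rightarrow> real) \<Rightarrow> (real^'s \<Rightarrow> 's \<Rightarrow> 'a \<Rightarrow> real)
     \<Rightarrow> real \<Rightarrow> real^'s \<Rightarrow> ('s \<Rightarrow> 'a) set" where
  "Dopt Q r \<beta> m = {d. \<forall>i. d i \<in> Oset Q r \<beta> m i}"

definition phi :: "(real^'s \<Rightarrow> 's::finite \<Rightarrow> 's \<Rightarrow> 'a::finite \<Rightarrow> real) \<Rightarrow> (real^'s \<Rightarrow> 's \<Rightarrow> 'a \<Rightarrow> real)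
     \<Rightarrow> real \<Rightarrow> real^'s \<Rightarrow> (real^'s) set" where
  "phi Q r \<beta> m = {x \<in> Pdist. \<exists>\<pi> \<in> convex hull (det_mat ` Dopt Q r \<beta> m).
                      \<forall>j. (\<Sum>i\<in>UNIV. x$i * Qpol Q m \<pi> i j) = 0}"

text \<open>x^d(m): the (unique under irreducibility) stationary distribution of Q^d(m).\<close>
definition xdet :: "(real^'s \<Rightarrow> 's::finite \<Rightarrow> 's \<Rightarrow> 'a::finite \<Rightarrow> real) \<Rightarrow> real^'s \<Rightarrow> ('s \<Rightarrow> 'a) \<Rightarrow> real^'s" where
  "xdet Q m d = (THE x. x \<in> Pdist \<and>
      (\<forall>j. (\<Sum>i\<in>UNIV. \<Sum>a\<in>UNIV. x$i * Q m i j a * det_mat d $i$a) = 0))"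

end

theory Submission
  imports Defs
begin

text \<open>Irreducibility makes the stationary distribution x(pi) of every stationary policy pi
  unique and positive. Let x_a be the stationary distribution when pi is changed to play
  action a at a single state i. The generators differ only in row i, where Q^pi is the
  pi_ia-mixture of theirs, so sum_a (pi_ia / x_a,i) x_a is stationary for pi: after
  normalisation, x(pi) is a convex combination of the x_a. Derandomising one state at a time
  puts x(pi) into the convex hull of the stationary distributions of deterministic policies
  with the same action sets. Conversely, the stationary distributions of policies with
  prescribed action sets form a convex set, because stationarity depends only on the
  occupation measure x_i pi_ia, which can be mixed.\<close>

section \<open>Stationary distributions of generators\<close>

definition stationary :: "('s::finite \<Rightarrow> 's \<Rightarrow> real) \<Rightarrow> real^'s \<Rightarrow> bool" where
  "stationary G x \<longleftrightarrow> (\<forall>j. (\<Sum>i\<in>UNIV. x$i * G i j) = 0)"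

definition stationary_dist :: "('s::finite \<Rightarrow> 's \<Rightarrow> real) \<Rightarrow> real^'s" where
  "stationary_dist G = (THE x. x \<in> Pdist \<and> stationary G x)"

lemma stationary_scaleR: "stationary G x \<Longrightarrow> stationary G (c *\<^sub>R x)"
  by (simp add: stationary_def mult.assoc flip: sum_distrib_left)

lemma stationary_diff: "stationary G x \<Longrightarrow> stationary G y \<Longrightarrow> stationary G (x - y)"
  by (simp add: stationary_def left_diff_distrib sum_subtractf)

lemma Pdist_le_1:
  assumes "x \<in> Pdist" shows "x$i \<le> 1"
proof -
  have "x$i \<le> (\<Sum>j\<in>UNIV. x$j)"
    by (rule member_le_sum) (use assms in \<open>auto simp: Pdist_def\<close>)
  then show ?thesis using assms by (simp add: Pdist_def)
qed

lemma compact_Pdist: "compact (Pdist :: (real^'n::finite) set)"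
  unfolding compact_eq_bounded_closed
proof
  have "Pdist \<subseteq> cbox (0::real^'n) (\<chi> i. 1)"
    by (auto simp: mem_box_cart Pdist_le_1) (simp add: Pdist_def)
  then show "bounded (Pdist :: (real^'n) set)"
    using bounded_cbox bounded_subset by blast
  have "Pdist = {x::real^'n. \<forall>i. 0 \<le> x$i} \<inter> {x. (\<Sum>i\<in>UNIV. x$i) = 1}"
    by (auto simp: Pdist_def)
  moreover have "closed {x::real^'n. \<forall>i. 0 \<le> x$i}"
    by (simp add: closed_Collect_all closed_Collect_le continuous_on_component)
  moreover have "closed {x::real^'n. (\<Sum>i\<in>UNIV. x$i) = 1}"
    by (intro closed_Collect_eq continuous_intros)
  ultimately show "closed (Pdist :: (real^'n) set)" by (metis closed_Int)
qed

lemma convex_Pdist: "convex (Pdist :: (real^'n::finite) set)"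
  unfolding convex_def Pdist_def
  by (auto simp: sum.distrib simp flip: sum_distrib_left)

lemma Pdist_nonempty: "(Pdist :: (real^'n::finite) set) \<noteq> {}"
proof -
  have "axis undefined 1 \<in> (Pdist :: (real^'n) set)"
    by (simp add: Pdist_def axis_def)
  then show ?thesis by blast
qed

text \<open>Brouwer's theorem applied to the step x \<mapsto> x + x G / c of the uniformised chain,
  which maps Pdist into itself once c bounds the exit rates.\<close>
lemma stationary_exists:
  fixes G :: "'s::finite \<Rightarrow> 's \<Rightarrow> real"
  assumes cons: "conservative G"
  shows "\<exists>x\<in>Pdist. stationary G x"
proof -
  define c where "c = 1 + (\<Sum>i\<in>UNIV. \<bar>G i i\<bar>)"
  have c_pos: "0 < c" unfolding c_def by (simp add: add_pos_nonneg sum_nonneg)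
  have c_ge: "\<bar>G j j\<bar> \<le> c" for j
    using member_le_sum[of j UNIV "\<lambda>i. \<bar>G i i\<bar>"] by (simp add: c_def)
  define f where "f x = x + (1/c) *\<^sub>R (\<chi> j. \<Sum>i\<in>UNIV. x$i * G i j)" for x :: "real^'s"
  have "continuous_on Pdist f"
    unfolding f_def by (intro continuous_intros continuous_on_vec_lambda)
  moreover have "f \<in> Pdist \<rightarrow> Pdist"
  proof
    fix x :: "real^'s" assume x: "x \<in> Pdist"
    have "0 \<le> f x $ j" for j
    proof -
      have "f x $ j = x$j * (1 + G j j / c) + (1/c) * (\<Sum>i\<in>UNIV-{j}. x$i * G i j)"
        by (simp add: f_def sum.remove[of UNIV j] algebra_simps)
      moreover have "0 \<le> 1 + G j j / c" using c_ge[of j] c_pos by (simp add: abs_le_iff field_simps)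
      moreover have "0 \<le> (\<Sum>i\<in>UNIV-{j}. x$i * G i j)"
        using x cons by (intro sum_nonneg) (auto simp: Pdist_def conservative_def)
      ultimately show ?thesis using x c_pos by (simp add: Pdist_def)
    qed
    moreover have "(\<Sum>j\<in>UNIV. \<Sum>i\<in>UNIV. x$i * G i j) = 0"
      using cons by (subst sum.swap) (simp add: conservative_def flip: sum_distrib_left)
    then have "(\<Sum>j\<in>UNIV. f x $ j) = (\<Sum>j\<in>UNIV. x$j)"
      by (simp add: f_def sum.distrib flip: sum_divide_distrib)
    ultimately show "f x \<in> Pdist" using x by (simp add: Pdist_def)
  qed
  ultimately obtain x where x: "x \<in> Pdist" and "f x = x"
    using brouwer[OF compact_Pdist convex_Pdist Pdist_nonempty] by blast
  then have "(\<chi> j. \<Sum>i\<in>UNIV. x$i * G i j) = 0" using c_pos by (simp add: f_def)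
  then show ?thesis using x by (auto simp: stationary_def vec_eq_iff)
qed

text \<open>A zero of y at j forces zeros at every i with an edge i \<rightarrow> j, because column j of
  the stationarity equation is then a sum of nonnegative terms; irreducibility spreads
  the zero everywhere.\<close>
lemma stationary_nonneg_eq_0:
  fixes G :: "'s::finite \<Rightarrow> 's \<Rightarrow> real"
  assumes cons: "conservative G" and irr: "irreducible G"
    and nonneg: "\<And>i. 0 \<le> y$i" and st: "stationary G y" and zero: "y$k = 0"
  shows "y = 0"
proof -
  let ?E = "{(k, l). k \<noteq> l \<and> 0 < G k l}"
  have edge: "y$i = 0" if e: "(i, j) \<in> ?E" and yj: "y$j = 0" for i j
  proof -
    have "(\<Sum>l\<in>UNIV-{j}. y$l * G l j) = 0"
      using st yj by (simp add: stationary_def sum.remove[of UNIV j])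
    then have "\<forall>l\<in>UNIV-{j}. y$l * G l j = 0"
      using nonneg cons by (subst (asm) sum_nonneg_eq_0_iff) (auto simp: conservative_def)
    then show ?thesis using e by auto
  qed
  have "y$i = 0" for i
  proof -
    have "(i, k) \<in> ?E\<^sup>*" using irr by (simp add: irreducible_def)
    then show ?thesis
      by (induction rule: converse_rtrancl_induct) (use zero edge in auto)
  qed
  then show ?thesis by (simp add: vec_eq_iff)
qed

lemma stationary_Pdist_pos:
  fixes G :: "'s::finite \<Rightarrow> 's \<Rightarrow> real"
  assumes "conservative G" "irreducible G" and x: "x \<in> Pdist" "stationary G x"
  shows "0 < x$i"
proof (rule ccontr)
  assume "\<not> 0 < x$i"
  then have "x$i = 0" using x by (auto simp: Pdist_def intro: antisym)
  then have "x = 0" using stationary_nonneg_eq_0[OF assms(1,2)] x by (auto simp: Pdist_def)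
  then show False using x by (simp add: Pdist_def)
qed

text \<open>For the largest t with x - t x' \<ge> 0, the stationary vector x - t x' has a zero
  entry, so it vanishes.\<close>
lemma stationary_Pdist_unique:
  fixes G :: "'s::finite \<Rightarrow> 's \<Rightarrow> real"
  assumes G: "conservative G" "irreducible G"
    and x: "x \<in> Pdist" "stationary G x" and x': "x' \<in> Pdist" "stationary G x'"
  shows "x = x'"
proof -
  have pos: "0 < x'$i" for i using stationary_Pdist_pos[OF G x'] .
  define t where "t = Min (range (\<lambda>i. x$i / x'$i))"
  have "t \<in> range (\<lambda>i. x$i / x'$i)" unfolding t_def by (rule Min_in) auto
  then obtain k where k: "t = x$k / x'$k" by blast
  have "t \<le> x$i / x'$i" for i unfolding t_def by (rule Min_le) auto
  then have "0 \<le> (x - t *\<^sub>R x')$i" for i using pos[of i] by (simp add: le_divide_eq)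
  moreover have "(x - t *\<^sub>R x')$k = 0" using pos[of k] by (simp add: k)
  ultimately have "x - t *\<^sub>R x' = 0"
    using stationary_nonneg_eq_0[OF G] stationary_diff[OF x(2) stationary_scaleR[OF x'(2)]]
    by blast
  then have x_eq: "x = t *\<^sub>R x'" by simp
  then have "(\<Sum>i\<in>UNIV. x$i) = t * (\<Sum>i\<in>UNIV. x'$i)" by (simp add: sum_distrib_left)
  then have "t = 1" using x x' by (simp add: Pdist_def)
  then show ?thesis using x_eq by simp
qed

lemma
  fixes G :: "'s::finite \<Rightarrow> 's \<Rightarrow> real"
  assumes "conservative G" "irreducible G"
  shows stationary_dist_in_Pdist: "stationary_dist G \<in> Pdist"
    and stationary_stationary_dist: "stationary G (stationary_dist G)"
proof -
  have "\<exists>!x. x \<in> Pdist \<and> stationary G x"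
    using stationary_exists[OF assms(1)] stationary_Pdist_unique[OF assms] by blast
  then have "stationary_dist G \<in> Pdist \<and> stationary G (stationary_dist G)"
    unfolding stationary_dist_def by (rule theI')
  then show "stationary_dist G \<in> Pdist" "stationary G (stationary_dist G)" by blast+
qed

lemma stationary_dist_eqI:
  fixes G :: "'s::finite \<Rightarrow> 's \<Rightarrow> real"
  assumes "conservative G" "irreducible G" "x \<in> Pdist" "stationary G x"
  shows "stationary_dist G = x"
  using stationary_Pdist_unique assms stationary_dist_in_Pdist stationary_stationary_dist
  by metis

text \<open>Each x_b fails to be stationary for G only through row i, with defect
  x_b,i (G_i - G_b,i); the weights mu_b / x_b,i make these defects cancel.\<close>
lemma stationary_row_mixture:
  fixes G :: "'s::finite \<Rightarrow> 's \<Rightarrow> real" and Gs :: "'b \<Rightarrow> 's \<Rightarrow> 's \<Rightarrow> real"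
  assumes "sum \<mu> B = 1"
    and off_row: "\<And>b k j. b \<in> B \<Longrightarrow> k \<noteq> i \<Longrightarrow> Gs b k j = G k j"
    and row: "\<And>j. G i j = (\<Sum>b\<in>B. \<mu> b * Gs b i j)"
    and st: "\<And>b. b \<in> B \<Longrightarrow> stationary (Gs b) (xs b)"
    and nz: "\<And>b. b \<in> B \<Longrightarrow> xs b $ i \<noteq> 0"
  shows "stationary G (\<Sum>b\<in>B. (\<mu> b / xs b $ i) *\<^sub>R xs b)"
  unfolding stationary_def
proof
  fix j
  have defect: "(\<Sum>k\<in>UNIV. xs b $ k * G k j) = xs b $ i * (G i j - Gs b i j)" if b: "b \<in> B" for b
  proof -
    have "(\<Sum>k\<in>UNIV. xs b $ k * G k j) = (\<Sum>k\<in>UNIV. xs b $ k * Gs b k j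
        + (if k = i then xs b $ i * (G i j - Gs b i j) else 0))"
      using off_row[OF b] by (intro sum.cong) (auto simp: algebra_simps)
    also have "\<dots> = xs b $ i * (G i j - Gs b i j)"
      using st[OF b] by (simp add: sum.distrib stationary_def)
    finally show ?thesis .
  qed
  have "(\<Sum>k\<in>UNIV. (\<Sum>b\<in>B. (\<mu> b / xs b $ i) *\<^sub>R xs b) $ k * G k j)
      = (\<Sum>b\<in>B. (\<mu> b / xs b $ i) * (\<Sum>k\<in>UNIV. xs b $ k * G k j))"
    by (simp add: sum_distrib_left sum_distrib_right mult.assoc sum.swap[of _ UNIV])
  also have "\<dots> = (\<Sum>b\<in>B. \<mu> b * G i j - \<mu> b * Gs b i j)"
  proof (rule sum.cong[OF refl])
    fix b assume "b \<in> B"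
    then show "(\<mu> b / xs b $ i) * (\<Sum>k\<in>UNIV. xs b $ k * G k j) = \<mu> b * G i j - \<mu> b * Gs b i j"
      using defect nz by (simp add: right_diff_distrib)
  qed
  also have "\<dots> = 0"
    using assms(1) row by (simp add: sum_subtractf flip: sum_distrib_right)
  finally show "(\<Sum>k\<in>UNIV. (\<Sum>b\<in>B. (\<mu> b / xs b $ i) *\<^sub>R xs b) $ k * G k j) = 0" .
qed

lemma convex_normalised_sum:
  assumes "convex C" "finite B" "\<And>b. b \<in> B \<Longrightarrow> 0 \<le> c b" "0 < sum c B"
    and "\<And>b. b \<in> B \<Longrightarrow> xs b \<in> C"
  shows "(\<Sum>b\<in>B. (c b / sum c B) *\<^sub>R xs b) \<in> C"
  using assms by (intro convex_sum) (auto simp flip: sum_divide_distrib)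

lemma stationary_dist_row_mixture:
  fixes G :: "'s::finite \<Rightarrow> 's \<Rightarrow> real" and Gs :: "'b \<Rightarrow> 's \<Rightarrow> 's \<Rightarrow> real"
  assumes "finite B" "sum \<mu> B = 1" "\<And>b. b \<in> B \<Longrightarrow> 0 \<le> \<mu> b"
    and G: "conservative G" "irreducible G"
    and Gs: "\<And>b. b \<in> B \<Longrightarrow> conservative (Gs b)" "\<And>b. b \<in> B \<Longrightarrow> irreducible (Gs b)"
    and off_row: "\<And>b k j. b \<in> B \<Longrightarrow> k \<noteq> i \<Longrightarrow> Gs b k j = G k j"
    and row: "\<And>j. G i j = (\<Sum>b\<in>B. \<mu> b * Gs b i j)"
  shows "stationary_dist G \<in> convex hull ((\<lambda>b. stationary_dist (Gs b)) ` B)"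
proof -
  define xs where "xs b = stationary_dist (Gs b)" for b
  define c where "c b = \<mu> b / xs b $ i" for b
  have xs: "xs b \<in> Pdist" "stationary (Gs b) (xs b)" "0 < xs b $ i" if "b \<in> B" for b
    unfolding xs_def using stationary_dist_in_Pdist stationary_Pdist_pos stationary_stationary_dist
      Gs[OF that] by blast+
  have c_nonneg: "0 \<le> c b" if "b \<in> B" for b
    using assms(3)[OF that] xs(3)[OF that] by (simp add: c_def)
  have "sum c B \<noteq> 0"
  proof
    assume "sum c B = 0"
    then have "\<forall>b\<in>B. c b = 0" using c_nonneg sum_nonneg_eq_0_iff[OF assms(1)] by blast
    then have "\<forall>b\<in>B. \<mu> b = 0" using xs(3) by (fastforce simp: c_def)
    then show False using assms(2) by simp
  qed
  then have c_pos: "0 < sum c B" using c_nonneg by (simp add: order_less_le sum_nonneg)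
  define z where "z = (\<Sum>b\<in>B. (c b / sum c B) *\<^sub>R xs b)"
  have "z \<in> convex hull (xs ` B)"
    unfolding z_def using assms(1) c_nonneg c_pos
    by (intro convex_normalised_sum convex_convex_hull hull_inc) auto
  moreover have "z \<in> Pdist"
    unfolding z_def using assms(1) c_nonneg c_pos xs(1)
    by (intro convex_normalised_sum convex_Pdist) auto
  moreover have "stationary G z"
  proof -
    have "stationary G (\<Sum>b\<in>B. c b *\<^sub>R xs b)"
      unfolding c_def using assms(2) off_row row xs(2,3)
      by (intro stationary_row_mixture) (auto simp: order_less_imp_not_eq2)
    then have "stationary G ((1 / sum c B) *\<^sub>R (\<Sum>b\<in>B. c b *\<^sub>R xs b))"
      by (rule stationary_scaleR)
    then show ?thesis by (simp add: z_def scaleR_sum_right)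
  qed
  ultimately show ?thesis using stationary_dist_eqI[OF G] by (simp add: xs_def)
qed

section \<open>Stationary policies with prescribed action sets\<close>

definition policies_on :: "('s::finite \<Rightarrow> 'a::finite set) \<Rightarrow> (real^'a^'s) set" where
  "policies_on Ok = {\<pi> \<in> stat_strategies. \<forall>i a. \<pi>$i$a \<noteq> 0 \<longrightarrow> a \<in> Ok i}"

definition fix_action :: "real^'a::finite^'s::finite \<Rightarrow> 's \<Rightarrow> 'a \<Rightarrow> real^'a^'s" where
  "fix_action \<pi> i a = (\<chi> k b. if k = i then (if b = a then 1 else 0) else \<pi>$k$b)"

lemma fix_action_nth [simp]:
  "fix_action \<pi> i a $ k $ b = (if k = i then (if b = a then 1 else 0) else \<pi>$k$b)"
  by (simp add: fix_action_def)

lemma det_mat_nth [simp]: "det_mat d $ i $ a = (if a = d i then 1 else 0)"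
  by (simp add: det_mat_def)

lemma det_mat_in_policies_on: "(\<And>i. d i \<in> Ok i) \<Longrightarrow> det_mat d \<in> policies_on Ok"
  by (simp add: policies_on_def stat_strategies_def Pdist_def)

lemma fix_action_in_policies_on:
  assumes "\<pi> \<in> policies_on Ok" "a \<in> Ok i"
  shows "fix_action \<pi> i a \<in> policies_on Ok"
proof -
  have "fix_action \<pi> i a $ k \<in> Pdist" for k
    using assms(1) by (cases "k = i") (auto simp: policies_on_def stat_strategies_def Pdist_def)
  then show ?thesis using assms by (auto simp: policies_on_def stat_strategies_def)
qed

lemma sum_support:
  fixes v :: "real^'a::finite"
  shows "(\<Sum>a\<in>{a. v$a \<noteq> 0}. f a * v$a) = (\<Sum>a\<in>UNIV. f a * v$a)"
  by (rule sum.mono_neutral_left) auto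

lemma Pdist_support_sum: "v \<in> Pdist \<Longrightarrow> (\<Sum>a\<in>{a. v$a \<noteq> 0}. v$a) = 1"
  using sum_support[where v=v and f="\<lambda>_. 1"] by (simp add: Pdist_def)

lemma Pdist_ex_pos:
  assumes "v \<in> Pdist" shows "\<exists>a. 0 < v$a"
proof -
  have "{a. v$a \<noteq> 0} \<noteq> {}" using Pdist_support_sum[OF assms] by force
  then show ?thesis using assms by (force simp: Pdist_def order_less_le)
qed

lemma row_decomposition:
  fixes \<pi> :: "real^'a::finite^'s::finite"
  assumes "\<pi>$i \<in> Pdist"
  shows "\<pi> = (\<Sum>a\<in>{a. \<pi>$i$a \<noteq> 0}. \<pi>$i$a *\<^sub>R fix_action \<pi> i a)"
proof -
  let ?B = "{a. \<pi>$i$a \<noteq> 0}"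
  have entry: "\<pi>$k$b = (\<Sum>a\<in>?B. \<pi>$i$a *\<^sub>R fix_action \<pi> i a) $ k $ b" for k b
  proof (cases "k = i")
    case True
    then have "(\<Sum>a\<in>?B. \<pi>$i$a *\<^sub>R fix_action \<pi> i a) $ k $ b
        = (\<Sum>a\<in>?B. if b = a then \<pi>$i$a else 0)"
      unfolding sum_component using True by (intro sum.cong) auto
    also have "\<dots> = \<pi>$k$b" using True by (simp add: sum.delta)
    finally show ?thesis ..
  next
    case False
    then show ?thesis
      by (simp add: sum_component Pdist_support_sum[OF assms] flip: sum_distrib_right)
  qed
  then show ?thesis unfolding vec_eq_iff by blast
qed

lemma policies_on_induct [consumes 1, case_names det mix]:
  assumes "\<pi> \<in> policies_on Ok"
    and det: "\<And>d. (\<And>i. d i \<in> Ok i) \<Longrightarrow> P (det_mat d)"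
    and mix: "\<And>\<pi> i. \<pi> \<in> policies_on Ok \<Longrightarrow> (\<And>a. \<pi>$i$a \<noteq> 0 \<Longrightarrow> P (fix_action \<pi> i a)) \<Longrightarrow> P \<pi>"
  shows "P \<pi>"
proof -
  let ?pure_off = "\<lambda>F \<pi>. \<forall>k. k \<notin> F \<longrightarrow> (\<exists>a. \<forall>b. \<pi>$k$b = (if b = a then 1 else 0))"
  have "\<forall>\<pi>\<in>policies_on Ok. ?pure_off F \<pi> \<longrightarrow> P \<pi>" if "finite F" for F
    using that
  proof (induction F rule: finite_induct)
    case empty
    show ?case
    proof clarify
      fix \<pi> assume \<pi>: "\<pi> \<in> policies_on Ok" and "?pure_off {} \<pi>"
      then obtain d where d: "\<forall>k b. \<pi>$k$b = (if b = d k then 1 else 0)"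
        using choice[of "\<lambda>k a. \<forall>b. \<pi>$k$b = (if b = a then 1 else 0)"] by blast
      then have "\<pi> = det_mat d" by (simp add: vec_eq_iff)
      moreover have "d k \<in> Ok k" for k
        using \<pi> d[rule_format, of k "d k"] by (simp add: policies_on_def)
      ultimately show "P \<pi>" using det by blast
    qed
  next
    case (insert i F)
    show ?case
    proof clarify
      fix \<pi> assume \<pi>: "\<pi> \<in> policies_on Ok" and pure: "?pure_off (insert i F) \<pi>"
      show "P \<pi>"
      proof (rule mix[OF \<pi>])
        fix a assume "\<pi>$i$a \<noteq> 0"
        then have "fix_action \<pi> i a \<in> policies_on Ok"
          using \<pi> by (intro fix_action_in_policies_on) (auto simp: policies_on_def)
        moreover have "?pure_off F (fix_action \<pi> i a)"
        proof (intro allI impI)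
          fix k assume "k \<notin> F"
          then show "\<exists>a'. \<forall>b. fix_action \<pi> i a $ k $ b = (if b = a' then 1 else 0)"
            using pure by (cases "k = i") auto
        qed
        ultimately show "P (fix_action \<pi> i a)" using insert.IH by blast
      qed
    qed
  qed
  from this[of UNIV] show ?thesis using assms(1) by simp
qed

lemma convex_policies_on: "convex (policies_on (Ok :: 's::finite \<Rightarrow> 'a::finite set))"
  unfolding convex_def
proof clarify
  fix x y :: "real^'a^'s" and u v :: real
  assume x: "x \<in> policies_on Ok" and y: "y \<in> policies_on Ok" and "0 \<le> u" "0 \<le> v" "u + v = 1"
  then have "u *\<^sub>R x$i + v *\<^sub>R y$i \<in> Pdist" for i
    using convex_Pdist unfolding convex_def policies_on_def stat_strategies_def by blast
  moreover have "a \<in> Ok i" if "u * x$i$a + v * y$i$a \<noteq> 0" for i a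
    using that x y by (cases "x$i$a = 0") (auto simp: policies_on_def)
  ultimately show "u *\<^sub>R x + v *\<^sub>R y \<in> policies_on Ok"
    by (auto simp: policies_on_def stat_strategies_def)
qed

lemma convex_hull_det_mat: "convex hull (det_mat ` {d. \<forall>i. d i \<in> Ok i}) = policies_on Ok"
proof
  show "convex hull (det_mat ` {d. \<forall>i. d i \<in> Ok i}) \<subseteq> policies_on Ok"
    by (rule hull_minimal) (auto intro: det_mat_in_policies_on convex_policies_on)
  show "policies_on Ok \<subseteq> convex hull (det_mat ` {d. \<forall>i. d i \<in> Ok i})"
  proof
    fix \<pi> assume "\<pi> \<in> policies_on Ok"
    then show "\<pi> \<in> convex hull (det_mat ` {d. \<forall>i. d i \<in> Ok i})"
    proof (induction rule: policies_on_induct)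
      case (det d)
      then show ?case by (intro hull_inc) auto
    next
      case (mix \<pi> i)
      have row: "\<pi>$i \<in> Pdist" using mix.hyps by (simp add: policies_on_def stat_strategies_def)
      have "(\<Sum>a\<in>{a. \<pi>$i$a \<noteq> 0}. \<pi>$i$a *\<^sub>R fix_action \<pi> i a)
          \<in> convex hull (det_mat ` {d. \<forall>i. d i \<in> Ok i})"
        using Pdist_support_sum[OF row] row mix.IH
        by (intro convex_sum[OF _ convex_convex_hull]) (auto simp: Pdist_def)
      then show ?case using row_decomposition[OF row, symmetric] by simp
    qed
  qed
qed

section \<open>Stationary distributions under stationary policies\<close>

lemma Qpol_fix_action:
  "Qpol Q m (fix_action \<pi> i a) k j = (if k = i then Q m i j a else Qpol Q m \<pi> k j)"
  by (simp add: Qpol_def flip: of_bool_def)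

lemma Qpol_det_mat: "Qpol Q m (det_mat d) k j = Q m k j (d k)"
  by (simp add: Qpol_def flip: of_bool_def)

lemma Qpol_conservative:
  fixes Q :: "real^'s::finite \<Rightarrow> 's \<Rightarrow> 's \<Rightarrow> 'a::finite \<Rightarrow> real"
  assumes CQ: "\<And>a. conservative (\<lambda>i j. Q m i j a)" and \<pi>: "\<pi> \<in> stat_strategies"
  shows "conservative (Qpol Q m \<pi>)"
  unfolding conservative_def
proof safe
  fix i j :: 's assume "i \<noteq> j"
  then show "0 \<le> Qpol Q m \<pi> i j"
    using CQ \<pi> unfolding Qpol_def conservative_def stat_strategies_def Pdist_def
    by (intro sum_nonneg mult_nonneg_nonneg) auto
next
  fix i
  have "(\<Sum>j\<in>UNIV. Qpol Q m \<pi> i j) = (\<Sum>a\<in>UNIV. \<pi>$i$a * (\<Sum>j\<in>UNIV. Q m i j a))"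
    unfolding Qpol_def by (subst sum.swap) (simp add: sum_distrib_left mult.commute)
  also have "\<dots> = 0" using CQ by (simp add: conservative_def)
  finally show "(\<Sum>j\<in>UNIV. Qpol Q m \<pi> i j) = 0" .
qed

text \<open>Choosing in every state an action that \<pi> plays with positive probability gives a
  deterministic policy whose transition graph is a subgraph of that of \<pi>.\<close>
lemma Qpol_irreducible:
  fixes Q :: "real^'s::finite \<Rightarrow> 's \<Rightarrow> 's \<Rightarrow> 'a::finite \<Rightarrow> real"
  assumes CQ: "\<And>a. conservative (\<lambda>i j. Q m i j a)" and \<pi>: "\<pi> \<in> stat_strategies"
    and irr: "\<And>d :: 's \<Rightarrow> 'a. irreducible (Qpol Q m (det_mat d))"
  shows "irreducible (Qpol Q m \<pi>)"
proof -
  have "\<exists>a. 0 < \<pi>$k$a" for k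
    using \<pi> by (intro Pdist_ex_pos) (simp add: stat_strategies_def)
  then obtain d where d_pos: "\<And>k. 0 < \<pi>$k$(d k)" by metis
  have "{(k, l). k \<noteq> l \<and> 0 < Qpol Q m (det_mat d) k l} \<subseteq> {(k, l). k \<noteq> l \<and> 0 < Qpol Q m \<pi> k l}"
  proof clarify
    fix k l assume kl: "k \<noteq> l" and "0 < Qpol Q m (det_mat d) k l"
    then have "0 < Q m k l (d k) * \<pi>$k$(d k)"
      using d_pos by (simp add: Qpol_det_mat)
    also have "\<dots> \<le> Qpol Q m \<pi> k l"
      unfolding Qpol_def
      using CQ kl \<pi> by (intro member_le_sum mult_nonneg_nonneg)
        (auto simp: conservative_def stat_strategies_def Pdist_def)
    finally show "0 < Qpol Q m \<pi> k l" .
  qed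
  then show ?thesis using irr[of d] rtrancl_mono unfolding irreducible_def by blast
qed

lemma stationary_Qpol_iff:
  "stationary (Qpol Q m \<pi>) x \<longleftrightarrow> (\<forall>j. (\<Sum>k\<in>UNIV. \<Sum>a\<in>UNIV. Q m k j a * (x$k * \<pi>$k$a)) = 0)"
  by (simp add: stationary_def Qpol_def sum_distrib_left algebra_simps)

lemma xdet_eq_stationary_dist: "xdet Q m d = stationary_dist (Qpol Q m (det_mat d))"
  by (simp add: xdet_def stationary_dist_def stationary_def Qpol_def sum_distrib_left mult.assoc)

lemma xdet_stationary:
  fixes Q :: "real^'s::finite \<Rightarrow> 's \<Rightarrow> 's \<Rightarrow> 'a::finite \<Rightarrow> real"
  assumes CQ: "\<And>a. conservative (\<lambda>i j. Q m i j a)"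
    and irr: "\<And>d :: 's \<Rightarrow> 'a. irreducible (Qpol Q m (det_mat d))"
  shows "xdet Q m d \<in> Pdist" "stationary (Qpol Q m (det_mat d)) (xdet Q m d)"
proof -
  have "det_mat d \<in> stat_strategies"
    using det_mat_in_policies_on[of d "\<lambda>_. UNIV"] by (simp add: policies_on_def)
  then have "conservative (Qpol Q m (det_mat d))"
    by (rule Qpol_conservative[where Q=Q and m=m, OF CQ])
  then show "xdet Q m d \<in> Pdist" "stationary (Qpol Q m (det_mat d)) (xdet Q m d)"
    unfolding xdet_eq_stationary_dist
    using irr stationary_dist_in_Pdist stationary_stationary_dist by blast+
qed

lemma stationary_dist_Qpol_in_hull_xdet:
  fixes Q :: "real^'s::finite \<Rightarrow> 's \<Rightarrow> 's \<Rightarrow> 'a::finite \<Rightarrow> real"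
  assumes CQ: "\<And>a. conservative (\<lambda>i j. Q m i j a)"
    and irr: "\<And>d :: 's \<Rightarrow> 'a. irreducible (Qpol Q m (det_mat d))"
    and \<pi>: "\<pi> \<in> policies_on Ok"
  shows "stationary_dist (Qpol Q m \<pi>) \<in> convex hull (xdet Q m ` {d. \<forall>i. d i \<in> Ok i})"
  using \<pi>
proof (induction rule: policies_on_induct)
  case (det d)
  then show ?case by (intro hull_inc) (auto simp: xdet_eq_stationary_dist)
next
  case (mix \<pi> i)
  note Q_conservative = Qpol_conservative[where Q=Q and m=m, OF CQ]
  note Q_irreducible = Qpol_irreducible[where Q=Q and m=m, OF CQ _ irr]
  let ?B = "{a. \<pi>$i$a \<noteq> 0}"
  have \<pi>_stat: "\<pi> \<in> stat_strategies" using mix.hyps by (simp add: policies_on_def)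
  then have fix_stat: "fix_action \<pi> i a \<in> stat_strategies" for a
    using fix_action_in_policies_on[of \<pi> "\<lambda>_. UNIV"] by (simp add: policies_on_def)
  have "stationary_dist (Qpol Q m \<pi>)
      \<in> convex hull ((\<lambda>a. stationary_dist (Qpol Q m (fix_action \<pi> i a))) ` ?B)"
  proof (rule stationary_dist_row_mixture)
    show "sum (\<lambda>a. \<pi>$i$a) ?B = 1" "\<And>a. a \<in> ?B \<Longrightarrow> 0 \<le> \<pi>$i$a"
      using \<pi>_stat by (auto simp: stat_strategies_def Pdist_def Pdist_support_sum)
    show "Qpol Q m \<pi> i j = (\<Sum>a\<in>?B. \<pi>$i$a * Qpol Q m (fix_action \<pi> i a) i j)" for j
      using sum_support[where v="\<pi>$i" and f="\<lambda>a. Q m i j a"]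
      by (simp add: Qpol_fix_action) (simp add: Qpol_def mult.commute)
    show "conservative (Qpol Q m \<pi>)" "irreducible (Qpol Q m \<pi>)"
      using \<pi>_stat by (rule Q_conservative Q_irreducible)+
    show "conservative (Qpol Q m (fix_action \<pi> i a))" "irreducible (Qpol Q m (fix_action \<pi> i a))"
      for a using fix_stat by (rule Q_conservative Q_irreducible)+
    show "Qpol Q m (fix_action \<pi> i a) k j = Qpol Q m \<pi> k j" if "k \<noteq> i" for a k j
      using that by (simp add: Qpol_fix_action)
  qed simp
  also have "\<dots> \<subseteq> convex hull (xdet Q m ` {d. \<forall>i. d i \<in> Ok i})"
    using mix.IH by (intro hull_minimal convex_convex_hull) auto
  finally show ?case .
qed

text \<open>Rows where p + q vanishes are irrelevant; there \<pi> is kept so that the support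
  condition still holds.\<close>
lemma policies_on_mix:
  assumes \<pi>: "\<pi> \<in> policies_on Ok" and \<pi>': "\<pi>' \<in> policies_on Ok"
    and p: "\<And>k. 0 \<le> p$k" and q: "\<And>k. 0 \<le> q$k"
  obtains \<rho> where "\<rho> \<in> policies_on Ok"
    and "\<And>k a. (p$k + q$k) * \<rho>$k$a = p$k * \<pi>$k$a + q$k * \<pi>'$k$a"
proof
  define \<rho> where "\<rho> = (\<chi> k. if p$k + q$k = 0 then \<pi>$k
      else (p$k / (p$k + q$k)) *\<^sub>R \<pi>$k + (q$k / (p$k + q$k)) *\<^sub>R \<pi>'$k)"
  show "(p$k + q$k) * \<rho>$k$a = p$k * \<pi>$k$a + q$k * \<pi>'$k$a" for k a
  proof (cases "p$k + q$k = 0")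
    case True
    then have "p$k = 0" "q$k = 0" using p[of k] q[of k] by linarith+
    then show ?thesis by simp
  next
    case False
    then show ?thesis by (simp add: \<rho>_def distrib_left mult.assoc[symmetric])
  qed
  have "\<rho>$k \<in> Pdist \<and> (\<forall>a. \<rho>$k$a \<noteq> 0 \<longrightarrow> a \<in> Ok k)" for k
  proof (cases "p$k + q$k = 0")
    case True
    then show ?thesis using \<pi> by (simp add: \<rho>_def policies_on_def stat_strategies_def)
  next
    case False
    then have "0 < p$k + q$k" using p[of k] q[of k] by linarith
    then have "(p$k / (p$k + q$k)) *\<^sub>R \<pi>$k + (q$k / (p$k + q$k)) *\<^sub>R \<pi>'$k \<in> Pdist"
      using \<pi> \<pi>' p[of k] q[of k] convex_Pdist
      by (intro convexD) (auto simp: policies_on_def stat_strategies_def add_divide_distrib[symmetric])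
    moreover have "a \<in> Ok k" if "\<rho>$k$a \<noteq> 0" for a
    proof -
      have "\<pi>$k$a \<noteq> 0 \<or> \<pi>'$k$a \<noteq> 0" using that False by (auto simp: \<rho>_def)
      then show ?thesis using \<pi> \<pi>' by (auto simp: policies_on_def)
    qed
    ultimately show ?thesis using False by (simp add: \<rho>_def)
  qed
  then show "\<rho> \<in> policies_on Ok" by (simp add: policies_on_def stat_strategies_def)
qed

lemma convex_stationary_policies_on:
  fixes Q :: "real^'s::finite \<Rightarrow> 's \<Rightarrow> 's \<Rightarrow> 'a::finite \<Rightarrow> real" and Ok :: "'s \<Rightarrow> 'a set"
  shows "convex {x \<in> Pdist. \<exists>\<pi>\<in>policies_on Ok. stationary (Qpol Q m \<pi>) x}"
  unfolding convex_def
proof clarify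
  fix x y :: "real^'s" and u v :: real and \<pi> \<pi>' :: "real^'a^'s"
  assume x: "x \<in> Pdist" and y: "y \<in> Pdist" and u: "0 \<le> u" and v: "0 \<le> v" and "u + v = 1"
    and \<pi>: "\<pi> \<in> policies_on Ok" and x_st: "stationary (Qpol Q m \<pi>) x"
    and \<pi>': "\<pi>' \<in> policies_on Ok" and y_st: "stationary (Qpol Q m \<pi>') y"
  have "u *\<^sub>R x + v *\<^sub>R y \<in> Pdist" using convex_Pdist x y u v \<open>u + v = 1\<close> by (rule convexD)
  moreover obtain \<rho> where \<rho>: "\<rho> \<in> policies_on Ok"
    and occupation: "\<And>k a. (u * x$k + v * y$k) * \<rho>$k$a = u * x$k * \<pi>$k$a + v * y$k * \<pi>'$k$a"
    using policies_on_mix[OF \<pi> \<pi>', of "u *\<^sub>R x" "v *\<^sub>R y"] x y u v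
    by (auto simp: Pdist_def)
  moreover have "stationary (Qpol Q m \<rho>) (u *\<^sub>R x + v *\<^sub>R y)"
    unfolding stationary_Qpol_iff
  proof
    fix j
    have "(\<Sum>k\<in>UNIV. \<Sum>a\<in>UNIV. Q m k j a * ((u *\<^sub>R x + v *\<^sub>R y)$k * \<rho>$k$a))
        = (\<Sum>k\<in>UNIV. \<Sum>a\<in>UNIV. Q m k j a * (u * x$k * \<pi>$k$a + v * y$k * \<pi>'$k$a))"
      by (simp only: vector_add_component vector_scaleR_component real_scaleR_def occupation)
    also have "\<dots> = u * (\<Sum>k\<in>UNIV. \<Sum>a\<in>UNIV. Q m k j a * (x$k * \<pi>$k$a))
          + v * (\<Sum>k\<in>UNIV. \<Sum>a\<in>UNIV. Q m k j a * (y$k * \<pi>'$k$a))"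
      by (simp add: sum_distrib_left sum.distrib algebra_simps)
    also have "\<dots> = 0" using x_st y_st by (simp add: stationary_Qpol_iff)
    finally show "(\<Sum>k\<in>UNIV. \<Sum>a\<in>UNIV. Q m k j a * ((u *\<^sub>R x + v *\<^sub>R y)$k * \<rho>$k$a)) = 0" .
  qed
  ultimately show "u *\<^sub>R x + v *\<^sub>R y \<in> Pdist
      \<and> (\<exists>\<pi>\<in>policies_on Ok. stationary (Qpol Q m \<pi>) (u *\<^sub>R x + v *\<^sub>R y))" by blast
qed

theorem mainTheorem8:
  fixes Q :: "real^'s::finite \<Rightarrow> 's \<Rightarrow> 's \<Rightarrow> 'a::finite \<Rightarrow> real"
    and r :: "real^'s \<Rightarrow> 's \<Rightarrow> 'a \<Rightarrow> real"
    and \<beta> :: real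
    and m :: "real^'s"
  assumes S_gt1: "CARD('s) > 1"
    and conserv: "\<And>a m. m \<in> Pdist \<Longrightarrow> conservative (\<lambda>i j. Q m i j a)"
    and Q_lip: "\<And>i j a. \<exists>C. C-lipschitz_on Pdist (\<lambda>m. Q m i j a)"
    and r_cont: "\<And>i a. continuous_on Pdist (\<lambda>m. r m i a)"
    and beta: "0 < \<beta>" "\<beta> < 1"
    and m_dist: "m \<in> Pdist"
    and irred: "\<And>d :: 's \<Rightarrow> 'a. irreducible (Qpol Q m (det_mat d))"
  shows "phi Q r \<beta> m = convex hull (xdet Q m ` Dopt Q r \<beta> m)"
proof -
  define Ok where "Ok = Oset Q r \<beta> m"
  have CQ: "\<And>a. conservative (\<lambda>i j. Q m i j a)" using conserv[OF m_dist] .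
  have Dopt: "Dopt Q r \<beta> m = {d. \<forall>i. d i \<in> Ok i}" by (simp add: Dopt_def Ok_def)
  have phi: "phi Q r \<beta> m = {x \<in> Pdist. \<exists>\<pi>\<in>policies_on Ok. stationary (Qpol Q m \<pi>) x}"
    unfolding phi_def Dopt convex_hull_det_mat stationary_def ..
  have dist: "stationary_dist (Qpol Q m \<pi>) = x"
    if "\<pi> \<in> policies_on Ok" "x \<in> Pdist" "stationary (Qpol Q m \<pi>) x" for \<pi> x
    using that Qpol_conservative[where Q=Q and m=m, OF CQ] Qpol_irreducible[where Q=Q and m=m, OF CQ _ irred]
    by (intro stationary_dist_eqI) (auto simp: policies_on_def)
  show ?thesis
  proof
    show "phi Q r \<beta> m \<subseteq> convex hull (xdet Q m ` Dopt Q r \<beta> m)"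
      unfolding phi Dopt using stationary_dist_Qpol_in_hull_xdet[OF CQ irred] dist by fastforce
    show "convex hull (xdet Q m ` Dopt Q r \<beta> m) \<subseteq> phi Q r \<beta> m"
      unfolding phi Dopt
      using xdet_stationary[OF CQ irred]
      by (intro hull_minimal convex_stationary_policies_on)
        (auto intro!: bexI[OF _ det_mat_in_policies_on])
  qed
qed

end
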